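(* Let $W\in\mathbb{Z}^{m\times n}$, let $P=\{Wx: x\in[0,1]^n\}$, and let $g: P\to\mathbb{R}$ be convex and continuously differentiable with $L$-Lipschitz continuous gradients (i.e. $\|\nabla g(u)-\nabla g(v)\|_\infty\le L\|u-v\|_1$ for all $u,v\in P$), satisfying the sharpness condition on $P$ with parameters $\mu>0$ and $\theta\in[0,1]$. Then $f(x)=g(Wx)$ admits a $\delta$-proximity with \[ \delta \le \left(\mu\left(m^4\tfrac{L}{4}\|W\|_\infty^2\right)^\theta + m + 2\right)(2m\|W\|_\infty+1)^m; \] that is, for every minimizer $x^\star$ of $f$ over $[0,1]^n$ with at most $m$ fractional entries there exists a minimizer $z^\star$ of $f$ over $\{0,1\}^n$ with $\|x^\star-z^\star\|_1$ at most the right-hand side.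
   Context: $\|W\|_\infty$ is the maximum absolute entry of $W$. A fractional entry of $x\in[0,1]^n$ is an entry not in $\{0,1\}$. Sharpness (Hölder error bound): for a convex set $P\subseteq\mathbb{R}^m$ and convex $g:P\to\mathbb{R}$ attaining its minimum on $P$ at $v^\star$, $g$ satisfies the sharpness condition on $P$ with parameters $0<\mu<\infty$ and $\theta\in[0,1]$ if $\mu\,(g(u)-g(v^\star))^\theta \ge \|u-v^\star\|_1$ for all $u\in P$. *)

theory Defs
  imports "HOL-Analysis.Analysis"
begin

definition norm1 :: "real ^ 'm \<Rightarrow> real" where
  "norm1 x = (\<Sum>i\<in>UNIV. \<bar>x $ i\<bar>)"

definition norminf :: "real ^ 'm \<Rightarrow> real" where
  "norminf x = Max ((\<lambda>i. \<bar>x $ i\<bar>) ` UNIV)"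

definition matinf :: "int ^ 'n ^ 'm \<Rightarrow> real" where
  "matinf W = Max {real_of_int \<bar>W $ i $ j\<bar> | i j. True}"

definition realmat :: "int ^ 'n ^ 'm \<Rightarrow> real ^ 'n ^ 'm" where
  "realmat W = (\<chi> i j. real_of_int (W $ i $ j))"

text \<open>Real power with the convention 0^0 = 1 (Isabelle's powr has 0 powr 0 = 0).\<close>
definition rpow :: "real \<Rightarrow> real \<Rightarrow> real" where
  "rpow x t = (if x = 0 then (if t = 0 then 1 else 0) else x powr t)"

definition unit_box :: "(real ^ 'n) set" where
  "unit_box = {x. \<forall>i. 0 \<le> x $ i \<and> x $ i \<le> 1}"

definition binary_points :: "(real ^ 'n) set" where
  "binary_points = {x. \<forall>i. x $ i = 0 \<or> x $ i = 1}"

definition fractional_entries :: "real ^ 'n \<Rightarrow> 'n set" where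
  "fractional_entries x = {i. x $ i \<noteq> 0 \<and> x $ i \<noteq> 1}"

definition sharp :: "(real ^ 'm) set \<Rightarrow> (real ^ 'm \<Rightarrow> real) \<Rightarrow> real \<Rightarrow> real \<Rightarrow> bool" where
  "sharp P g \<mu> \<theta> \<longleftrightarrow> 0 < \<mu> \<and> 0 \<le> \<theta> \<and> \<theta> \<le> 1 \<and>
     (\<exists>v\<in>P. (\<forall>u\<in>P. g v \<le> g u) \<and> (\<forall>u\<in>P. \<mu> * rpow (g u - g v) \<theta> \<ge> norm1 (u - v)))"

end

theory Submission
  imports Defs
begin

text \<open>
  Rounding a continuous minimizer x to a binary point moves only its at most m fractional
  coordinates, each by at most 1/2, and at x the gradient of g is orthogonal to the corresponding
  columns of W. The descent lemma therefore bounds the loss of rounding by m^4 (L/4) ||W||^2, and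
  sharpness puts the images under W of x and of every binary minimizer close together.

  Choose a binary minimizer z closest to x among those with the same image. The columns of W, signed
  by z_j - x_j, over the integral coordinates j where z and x differ form a family without nonempty
  zero subsums. A Steinitz-type ordering keeps the partial sums of this family within distance
  m ||W|| of the segment from 0 to its total sum; these partial sums are distinct lattice points, so
  counting the lattice points of that tube bounds the number of such coordinates.
\<close>

lemma norm1_nonneg: "0 \<le> norm1 x"
  unfolding norm1_def by (simp add: sum_nonneg)

lemma norm1_eq_0_iff: "norm1 x = 0 \<longleftrightarrow> x = 0"
  unfolding norm1_def by (simp add: sum_nonneg_eq_0_iff vec_eq_iff)

lemma norm1_triangle: "norm1 (x + y) \<le> norm1 x + norm1 y"
  unfolding norm1_def by (simp add: sum.distrib[symmetric] sum_mono abs_triangle_ineq)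

lemma norm1_minus_commute: "norm1 (x - y) = norm1 (y - x)"
  unfolding norm1_def by (simp add: abs_minus_commute)

lemma norm1_scaleR: "norm1 (c *\<^sub>R x) = \<bar>c\<bar> * norm1 x"
  unfolding norm1_def by (simp add: abs_mult sum_distrib_left)

lemma norm1_sum_le: "norm1 (\<Sum>j\<in>S. f j) \<le> (\<Sum>j\<in>S. norm1 (f j))"
proof (induction S rule: infinite_finite_induct)
  case (insert x F)
  then show ?case using norm1_triangle[of "f x" "sum f F"] by simp
qed (simp_all add: norm1_def)

lemma abs_le_norminf: "\<bar>x $ i\<bar> \<le> norminf x"
  unfolding norminf_def by (rule Max_ge) auto

lemma norminf_nonneg: "0 \<le> norminf x"
  using abs_le_norminf[of x] abs_ge_zero order_trans by blast

lemma inner_le_norminf_norm1: "(a::real^'m) \<bullet> b \<le> norminf a * norm1 b"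
proof -
  have "a \<bullet> b = (\<Sum>i\<in>UNIV. a$i * b$i)" by (simp add: inner_vec_def)
  also have "\<dots> \<le> (\<Sum>i\<in>UNIV. norminf a * \<bar>b$i\<bar>)"
  proof (rule sum_mono)
    fix i
    have "a$i * b$i \<le> \<bar>a$i\<bar> * \<bar>b$i\<bar>" by (metis abs_ge_self abs_mult)
    also have "\<dots> \<le> norminf a * \<bar>b$i\<bar>" by (intro mult_right_mono abs_le_norminf) auto
    finally show "a$i * b$i \<le> norminf a * \<bar>b$i\<bar>" .
  qed
  also have "\<dots> = norminf a * norm1 b" by (simp add: norm1_def sum_distrib_left)
  finally show ?thesis .
qed

lemma matrix_vector_mult_eq_sum_columns:
  "(A::real^'n^'m) *v x = (\<Sum>j\<in>UNIV. x$j *\<^sub>R column j A)"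
  by (simp add: matrix_mult_sum scalar_mult_eq_scaleR)

lemma norm1_column_le:
  assumes "\<And>i. \<bar>A $ i $ j\<bar> \<le> w"
  shows "norm1 (column j (A::real^'n^'m)) \<le> real CARD('m) * w"
proof -
  have "norm1 (column j A) \<le> (\<Sum>i\<in>(UNIV::'m set). w)"
    unfolding norm1_def column_def using assms by (intro sum_mono) simp
  then show ?thesis by simp
qed

lemma norm1_matrix_vector_le:
  assumes "\<And>i j. \<bar>A $ i $ j\<bar> \<le> w"
  shows "norm1 ((A::real^'n^'m) *v x) \<le> real CARD('m) * w * norm1 x"
proof -
  have "norm1 (A *v x) \<le> (\<Sum>j\<in>UNIV. norm1 (x$j *\<^sub>R column j A))"
    unfolding matrix_vector_mult_eq_sum_columns by (rule norm1_sum_le)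
  also have "\<dots> \<le> (\<Sum>j\<in>UNIV. \<bar>x$j\<bar> * (real CARD('m) * w))"
    using norm1_column_le[OF assms] by (intro sum_mono) (simp add: norm1_scaleR mult_left_mono)
  also have "\<dots> = real CARD('m) * w * norm1 x"
    by (simp add: norm1_def sum_distrib_left mult_ac)
  finally show ?thesis .
qed

lemma realmat_nth [simp]: "realmat W $ i $ j = real_of_int (W $ i $ j)"
  by (simp add: realmat_def)

lemma finite_matinf_entries: "finite {real_of_int \<bar>W $ i $ j\<bar> | i j. True}"
  by (rule finite_subset[of _ "(\<lambda>(i, j). real_of_int \<bar>W $ i $ j\<bar>) ` UNIV"]) auto

lemma abs_le_matinf: "\<bar>realmat W $ i $ j\<bar> \<le> matinf W"
  unfolding matinf_def using finite_matinf_entries by (intro Max_ge) auto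

lemma matinf_in_Nats: "matinf W \<in> \<nat>"
proof -
  have "{real_of_int \<bar>W $ i $ j\<bar> | i j. True} \<noteq> {}" by auto
  with finite_matinf_entries have "matinf W \<in> {real_of_int \<bar>W $ i $ j\<bar> | i j. True}"
    unfolding matinf_def by (rule Max_in)
  then obtain i j where "matinf W = real_of_int \<bar>W $ i $ j\<bar>" by blast
  also have "\<dots> = real (nat \<bar>W $ i $ j\<bar>)" by simp
  finally show ?thesis by (metis of_nat_in_Nats)
qed

lemma matinf_eq_0_iff: "matinf W = 0 \<longleftrightarrow> W = 0"
proof
  assume "matinf W = 0"
  then show "W = 0" using abs_le_matinf[of W] by (simp add: vec_eq_iff)
next
  assume "W = 0"
  then show "matinf W = 0" by (simp add: matinf_def)
qed

section \<open>Fractional points of a box cut by an affine subspace\<close>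

definition feasible_weights ::
    "'i set \<Rightarrow> ('i \<Rightarrow> real^'m) \<Rightarrow> real \<Rightarrow> real^'m \<Rightarrow> ('i \<Rightarrow> real) \<Rightarrow> bool" where
  "feasible_weights A u s y l \<longleftrightarrow>
     (\<forall>i\<in>A. 0 \<le> l i \<and> l i \<le> 1) \<and> sum l A = s \<and> (\<Sum>i\<in>A. l i *\<^sub>R u i) = y"

lemma affine_dependence_large_family:
  fixes u :: "'i \<Rightarrow> real^'m"
  assumes fin: "finite I" and card: "CARD('m) + 1 < card I"
  obtains \<delta> where "\<exists>i\<in>I. \<delta> i \<noteq> 0" "sum \<delta> I = 0" "(\<Sum>i\<in>I. \<delta> i *\<^sub>R u i) = 0"
proof (cases "inj_on (\<lambda>i. (u i, 1::real)) I")
  case False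
  then obtain i j where ij: "i \<in> I" "j \<in> I" "i \<noteq> j" "u i = u j"
    unfolding inj_on_def by blast
  define \<delta> where "\<delta> k = (if k = i then 1 else if k = j then -1 else (0::real))" for k
  have "sum \<delta> I = sum \<delta> {i, j}"
    by (rule sum.mono_neutral_right) (use fin ij in \<open>auto simp: \<delta>_def\<close>)
  also have "\<dots> = 0" using ij by (simp add: \<delta>_def)
  finally have "sum \<delta> I = 0" .
  moreover have "(\<Sum>k\<in>I. \<delta> k *\<^sub>R u k) = (\<Sum>k\<in>{i, j}. \<delta> k *\<^sub>R u k)"
    by (rule sum.mono_neutral_right) (use fin ij in \<open>auto simp: \<delta>_def\<close>)
  then have "(\<Sum>k\<in>I. \<delta> k *\<^sub>R u k) = 0" using ij by (simp add: \<delta>_def)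
  moreover have "\<exists>k\<in>I. \<delta> k \<noteq> 0" using ij(1) by (intro bexI[of _ i]) (simp_all add: \<delta>_def)
  ultimately show ?thesis using that by blast
next
  case True
  let ?v = "\<lambda>i. (u i, 1::real)"
  have "DIM((real^'m) \<times> real) < card (?v ` I)" using True card by (simp add: card_image)
  then have "dependent (?v ` I)" using independent_bound by fastforce
  then obtain c where c: "\<exists>x\<in>?v ` I. c x \<noteq> 0" "(\<Sum>x\<in>?v ` I. c x *\<^sub>R x) = 0"
    using dependent_finite[of "?v ` I"] fin by auto
  define \<delta> where "\<delta> i = c (?v i)" for i
  have pair_sum: "(\<Sum>i\<in>I. (\<delta> i *\<^sub>R u i, \<delta> i)) = 0"
    using c(2) sum.reindex[OF True, of "\<lambda>x. c x *\<^sub>R x"] by (simp add: \<delta>_def o_def)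
  have "(\<Sum>i\<in>I. \<delta> i *\<^sub>R u i) = fst (\<Sum>i\<in>I. (\<delta> i *\<^sub>R u i, \<delta> i))"
    "sum \<delta> I = snd (\<Sum>i\<in>I. (\<delta> i *\<^sub>R u i, \<delta> i))"
    by (simp_all add: fst_sum snd_sum)
  then have "(\<Sum>i\<in>I. \<delta> i *\<^sub>R u i) = 0" "sum \<delta> I = 0"
    unfolding pair_sum by simp_all
  then show ?thesis using that c(1) by (auto simp: \<delta>_def)
qed

lemma step_to_boundary:
  fixes l d :: "'i \<Rightarrow> real"
  assumes "finite J" "J \<noteq> {}" and J: "\<forall>i\<in>J. 0 < l i \<and> l i < 1 \<and> d i \<noteq> 0"
  obtains t where "0 \<le> t" "\<forall>i\<in>J. 0 \<le> l i + t * d i \<and> l i + t * d i \<le> 1"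
    "\<exists>i\<in>J. l i + t * d i = 0 \<or> l i + t * d i = 1"
proof -
  define b where "b i = (if d i > 0 then (1 - l i) / d i else - l i / d i)" for i
  define t where "t = Min (b ` J)"
  have b_pos: "0 < b i" if "i \<in> J" for i
    using J that by (auto simp: b_def divide_pos_neg)
  have t_le: "t \<le> b i" if "i \<in> J" for i
    using assms(1) that by (simp add: t_def)
  have "t \<in> b ` J" unfolding t_def using assms(1,2) by (intro Min_in) auto
  then obtain i0 where i0: "i0 \<in> J" "t = b i0" by blast
  have t_nonneg: "0 \<le> t" using b_pos[OF i0(1)] i0(2) by simp
  have "0 \<le> l i + t * d i \<and> l i + t * d i \<le> 1" if i: "i \<in> J" for i
  proof (cases "d i > 0")
    case True
    have "t * d i \<le> 1 - l i" using mult_right_mono[OF t_le[OF i], of "d i"] True by (simp add: b_def)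
    moreover have "0 \<le> t * d i" using True t_nonneg by simp
    ultimately show ?thesis using J i by force
  next
    case False
    have "b i * d i \<le> t * d i" using t_le[OF i] False by (simp add: mult_right_mono_neg)
    moreover have "t * d i \<le> 0" using False t_nonneg by (simp add: mult_nonneg_nonpos)
    ultimately show ?thesis using False J i by (force simp: b_def)
  qed
  moreover have "l i0 + t * d i0 = 0 \<or> l i0 + t * d i0 = 1"
    using i0 J by (simp add: b_def)
  ultimately show ?thesis using that t_nonneg i0(1) by blast
qed

lemma feasible_weights_shift:
  assumes "feasible_weights A u s y l" "sum d A = 0" "(\<Sum>i\<in>A. d i *\<^sub>R u i) = 0"
    and "\<forall>i\<in>A. 0 \<le> l i + t * d i \<and> l i + t * d i \<le> 1"
  shows "feasible_weights A u s y (\<lambda>i. l i + t * d i)"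
proof -
  have "(\<Sum>i\<in>A. l i + t * d i) = sum l A + t * sum d A"
    by (simp add: sum.distrib sum_distrib_left)
  moreover have "(\<Sum>i\<in>A. (l i + t * d i) *\<^sub>R u i) = (\<Sum>i\<in>A. l i *\<^sub>R u i) + t *\<^sub>R (\<Sum>i\<in>A. d i *\<^sub>R u i)"
    by (simp add: scaleR_add_left sum.distrib scaleR_sum_right)
  ultimately show ?thesis using assms by (simp add: feasible_weights_def)
qed

text \<open>The fractional coordinates of a point with more than m + 1 of them are affinely dependent;
  moving along the dependence until a coordinate reaches 0 or 1 preserves feasibility.\<close>
lemma feasible_weights_more_integral:
  fixes u :: "'i \<Rightarrow> real^'m"
  assumes fin: "finite A" and l: "feasible_weights A u s y l"
    and card: "CARD('m) + 1 < card {i\<in>A. 0 < l i \<and> l i < 1}"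
  obtains l' where "feasible_weights A u s y l'"
    "{i\<in>A. l i = 0 \<or> l i = 1} \<subset> {i\<in>A. l' i = 0 \<or> l' i = 1}"
proof -
  define Fr where "Fr = {i\<in>A. 0 < l i \<and> l i < 1}"
  have Fr: "finite Fr" "Fr \<subseteq> A" using fin by (auto simp: Fr_def)
  obtain \<delta> where \<delta>: "\<exists>i\<in>Fr. \<delta> i \<noteq> 0" "sum \<delta> Fr = 0" "(\<Sum>i\<in>Fr. \<delta> i *\<^sub>R u i) = 0"
    using affine_dependence_large_family[OF Fr(1)] card by (auto simp: Fr_def)
  define d where "d i = (if i \<in> Fr then \<delta> i else 0)" for i
  have restrict: "(\<Sum>i\<in>A. f i (d i)) = (\<Sum>i\<in>Fr. f i (\<delta> i))"
    if "\<And>i. f i 0 = 0" for f :: "'i \<Rightarrow> real \<Rightarrow> 'b::comm_monoid_add"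
    using sum.inter_restrict[OF fin, of "\<lambda>i. f i (\<delta> i)" Fr] Fr(2) that
    by (simp add: d_def if_distrib Int_absorb1 cong: if_cong)
  define J where "J = {i\<in>Fr. \<delta> i \<noteq> 0}"
  have "finite J" using Fr(1) by (simp add: J_def)
  moreover have "J \<noteq> {}" "\<forall>i\<in>J. 0 < l i \<and> l i < 1 \<and> d i \<noteq> 0"
    using \<delta>(1) by (auto simp: J_def Fr_def d_def)
  ultimately obtain t where t: "\<forall>i\<in>J. 0 \<le> l i + t * d i \<and> l i + t * d i \<le> 1"
    "\<exists>i\<in>J. l i + t * d i = 0 \<or> l i + t * d i = 1"
    by (rule step_to_boundary)
  have d_outside: "d i = 0" if "i \<notin> J" for i using that by (simp add: d_def J_def)
  have "\<forall>i\<in>A. 0 \<le> l i + t * d i \<and> l i + t * d i \<le> 1"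
  proof
    fix i assume "i \<in> A"
    then show "0 \<le> l i + t * d i \<and> l i + t * d i \<le> 1"
      using l t(1) d_outside[of i] by (cases "i \<in> J") (simp_all add: feasible_weights_def)
  qed
  then have "feasible_weights A u s y (\<lambda>i. l i + t * d i)"
    using restrict[of "\<lambda>_ c. c"] restrict[of "\<lambda>i c. c *\<^sub>R u i"] \<delta>(2,3)
    by (intro feasible_weights_shift[OF l]) simp_all
  moreover have "{i\<in>A. l i = 0 \<or> l i = 1} \<subset> {i\<in>A. l i + t * d i = 0 \<or> l i + t * d i = 1}"
  proof -
    have "d i = 0" if "l i = 0 \<or> l i = 1" for i using that by (auto simp: d_def Fr_def)
    then have "{i\<in>A. l i = 0 \<or> l i = 1} \<subseteq> {i\<in>A. l i + t * d i = 0 \<or> l i + t * d i = 1}"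
      by auto
    moreover obtain i0 where i0: "i0 \<in> J" "l i0 + t * d i0 = 0 \<or> l i0 + t * d i0 = 1"
      using t(2) by blast
    then have "i0 \<in> {i\<in>A. l i + t * d i = 0 \<or> l i + t * d i = 1}" "i0 \<notin> {i\<in>A. l i = 0 \<or> l i = 1}"
      using Fr(2) by (auto simp: J_def Fr_def)
    ultimately show ?thesis by blast
  qed
  ultimately show ?thesis using that by blast
qed

lemma feasible_weights_few_fractional:
  fixes u :: "'i \<Rightarrow> real^'m"
  assumes fin: "finite A" and "feasible_weights A u s y l"
  obtains l' where "feasible_weights A u s y l'" "card {i\<in>A. 0 < l' i \<and> l' i < 1} \<le> CARD('m) + 1"
proof -
  define integral where "integral l = card {i\<in>A. l i = 0 \<or> l i = 1}" for l :: "'i \<Rightarrow> real"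
  have "integral l'' < card A + 1" for l''
    unfolding integral_def using fin by (simp add: card_mono le_imp_less_Suc)
  then have "\<exists>l'. feasible_weights A u s y l' \<and>
      (\<forall>l''. feasible_weights A u s y l'' \<longrightarrow> integral l'' \<le> integral l')"
    using assms(2) by (intro ex_has_greatest_nat[of _ l _ "card A + 1"]) auto
  then obtain l' where l': "feasible_weights A u s y l'"
    and max: "\<And>l''. feasible_weights A u s y l'' \<Longrightarrow> integral l'' \<le> integral l'"
    by blast
  have "card {i\<in>A. 0 < l' i \<and> l' i < 1} \<le> CARD('m) + 1"
  proof (rule ccontr)
    assume "\<not> ?thesis"
    then have "CARD('m) + 1 < card {i\<in>A. 0 < l' i \<and> l' i < 1}" by simp
    then obtain l'' where l'': "feasible_weights A u s y l''"
      and more: "{i\<in>A. l' i = 0 \<or> l' i = 1} \<subset> {i\<in>A. l'' i = 0 \<or> l'' i = 1}"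
      by (rule feasible_weights_more_integral[OF fin l'])
    have "integral l' < integral l''"
      unfolding integral_def using fin more by (intro psubset_card_mono) auto
    then show False using max[OF l''] by simp
  qed
  then show ?thesis using that l' by blast
qed

lemma feasible_weights_zero_entry:
  fixes u :: "'i \<Rightarrow> real^'m"
  assumes fin: "finite A" and "feasible_weights A u s y l"
    and size: "s + real CARD('m) + 1 \<le> real (card A)"
  obtains l' i where "feasible_weights A u s y l'" "i \<in> A" "l' i = 0"
proof -
  obtain l' where l': "feasible_weights A u s y l'"
    and few: "card {i\<in>A. 0 < l' i \<and> l' i < 1} \<le> CARD('m) + 1"
    using feasible_weights_few_fractional[OF assms(1,2)] by blast
  have "\<exists>i\<in>A. l' i = 0"
  proof (rule ccontr)
    assume no_zero: "\<not> (\<exists>i\<in>A. l' i = 0)"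
    define Fr where "Fr = {i\<in>A. 0 < l' i \<and> l' i < 1}"
    define One where "One = {i\<in>A. l' i = 1}"
    have split: "A = Fr \<union> One" "Fr \<inter> One = {}" "finite Fr" "finite One"
      using no_zero l' fin by (force simp: Fr_def One_def feasible_weights_def)+
    have "s = sum l' A" using l' by (simp add: feasible_weights_def)
    also have "\<dots> = sum l' Fr + sum l' One" using split by (metis sum.union_disjoint)
    finally have "s = sum l' Fr + real (card One)" by (simp add: One_def)
    moreover have "card A = card Fr + card One" using split by (metis card_Un_disjoint)
    ultimately have "sum l' Fr \<le> 0" using size few[folded Fr_def] by simp
    moreover have "Fr \<noteq> {} \<Longrightarrow> 0 < sum l' Fr"
      using split(3) by (intro sum_pos) (auto simp: Fr_def)
    ultimately have "Fr = {}" by linarith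
    then show False using \<open>s = sum l' Fr + real (card One)\<close> \<open>card A = card Fr + card One\<close> size
      by simp
  qed
  then show ?thesis using that l' by blast
qed

section \<open>A Steinitz-type ordering\<close>

definition tube :: "real^'m \<Rightarrow> real \<Rightarrow> (real^'m) set" where
  "tube r N = {q. \<exists>c\<in>{0..1}. \<forall>k. \<bar>q$k - c * r$k\<bar> \<le> N}"

definition lattice_points :: "(real^'m) set" where
  "lattice_points = {q. \<forall>k. q$k \<in> \<int>}"

text \<open>The invariant of the Grinberg-Sevastyanov proof of the Steinitz lemma: weights in [0, 1] of
  total |A| - m combine the members of A to the point of the segment from 0 to the sum over D that is
  the fraction (|A| - m) / |D| of the way along.\<close>
definition steinitz_representable :: "'i set \<Rightarrow> ('i \<Rightarrow> real^'m) \<Rightarrow> 'i set \<Rightarrow> bool" where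
  "steinitz_representable D u A \<longleftrightarrow>
     (\<exists>l. feasible_weights A u (real (card A) - CARD('m))
            (((real (card A) - CARD('m)) / card D) *\<^sub>R sum u D) l)"

lemma steinitz_representable_whole:
  fixes u :: "'i \<Rightarrow> real^'m"
  assumes "CARD('m) \<le> card D"
  shows "steinitz_representable D u D"
proof -
  define a where "a = (real (card D) - CARD('m)) / card D"
  have D: "0 < card D" using assms zero_less_card_finite[where 'a='m] by linarith
  then have "0 \<le> a" "a \<le> 1" using assms by (auto simp: a_def divide_le_eq)
  moreover have "sum (\<lambda>_. a) D = real (card D) - CARD('m)" using D by (simp add: a_def)
  moreover have "(\<Sum>i\<in>D. a *\<^sub>R u i) = a *\<^sub>R sum u D" by (simp add: scaleR_sum_right)
  ultimately show ?thesis
    unfolding steinitz_representable_def feasible_weights_def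
    by (intro exI[of _ "\<lambda>_. a"]) (simp add: a_def)
qed

lemma steinitz_representable_remove:
  fixes u :: "'i \<Rightarrow> real^'m"
  assumes fin: "finite A" and big: "CARD('m) < card A" and rep: "steinitz_representable D u A"
  obtains i where "i \<in> A" "steinitz_representable D u (A - {i})"
proof -
  define k where "k = card A - 1"
  have k: "card A = Suc k" "CARD('m) \<le> k" using big by (auto simp: k_def)
  define y where "y s = (s / card D) *\<^sub>R sum u D" for s
  obtain l where l: "feasible_weights A u (real (card A) - CARD('m)) (y (real (card A) - CARD('m))) l"
    using rep by (auto simp: steinitz_representable_def y_def)
  define a where "a = (real k - CARD('m)) / (real (card A) - CARD('m))"
  have a: "0 \<le> a" "a \<le> 1" "a * (real (card A) - CARD('m)) = real k - CARD('m)"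
    using k by (auto simp: a_def divide_le_eq)
  have scale: "a * ((real (card A) - CARD('m)) / card D) = (real k - CARD('m)) / card D"
    using a(3) by (metis times_divide_eq_right)
  have "(\<Sum>i\<in>A. (a * l i) *\<^sub>R u i) = a *\<^sub>R (\<Sum>i\<in>A. l i *\<^sub>R u i)"
    by (simp add: scaleR_sum_right)
  also have "\<dots> = y (real k - CARD('m))"
    using l scale by (simp add: feasible_weights_def y_def)
  finally have "feasible_weights A u (real k - CARD('m)) (y (real k - CARD('m))) (\<lambda>i. a * l i)"
    using l a by (simp add: feasible_weights_def mult_le_one sum_distrib_left[symmetric])
  moreover have "(real k - CARD('m)) + real CARD('m) + 1 \<le> real (card A)" using k(1) by simp
  ultimately obtain l' i where l': "feasible_weights A u (real k - CARD('m)) (y (real k - CARD('m))) l'"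
    and i: "i \<in> A" "l' i = 0"
    using feasible_weights_zero_entry[OF fin] by blast
  have "feasible_weights (A - {i}) u (real k - CARD('m)) (y (real k - CARD('m))) l'"
    using l' i fin by (simp add: feasible_weights_def sum.remove)
  moreover have "card (A - {i}) = k" using i fin k by simp
  ultimately show ?thesis using that i by (auto simp: steinitz_representable_def y_def)
qed

lemma sum_in_tube_if_small:
  fixes w :: real
  assumes "card A \<le> CARD('m)" "\<forall>j\<in>A. \<forall>k. \<bar>u j $ k\<bar> \<le> w" "0 \<le> w"
  shows "sum u A \<in> tube (r::real^'m) (CARD('m) * w)"
proof -
  have "\<bar>sum u A $ k\<bar> \<le> CARD('m) * w" for k
  proof -
    have "\<bar>sum u A $ k\<bar> \<le> (\<Sum>j\<in>A. \<bar>u j $ k\<bar>)" by (simp only: sum_component sum_abs)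
    also have "\<dots> \<le> card A * w" using assms(2) sum_bounded_above[of A "\<lambda>j. \<bar>u j $ k\<bar>" w] by simp
    also have "\<dots> \<le> CARD('m) * w" using assms(1,3) by (simp add: mult_right_mono)
    finally show ?thesis .
  qed
  then show ?thesis unfolding tube_def by (intro CollectI bexI[of _ 0]) auto
qed

lemma sum_in_tube_if_representable:
  fixes u :: "'i \<Rightarrow> real^'m" and w :: real
  assumes "finite D" "A \<subseteq> D" "CARD('m) \<le> card A" "steinitz_representable D u A"
    and bound: "\<forall>j\<in>A. \<forall>k. \<bar>u j $ k\<bar> \<le> w"
  shows "sum u A \<in> tube (sum u D) (CARD('m) * w)"
proof -
  define c where "c = (real (card A) - CARD('m)) / card D"
  obtain l where l: "feasible_weights A u (real (card A) - CARD('m)) (c *\<^sub>R sum u D) l"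
    using assms(4) by (auto simp: steinitz_representable_def c_def)
  have "card A \<le> card D" using assms(1,2) by (rule card_mono)
  then have "c \<in> {0..1}" using assms(3) by (auto simp: c_def divide_le_eq)
  moreover have "\<bar>sum u A $ k - c * sum u D $ k\<bar> \<le> CARD('m) * w" for k
  proof -
    have "sum u A $ k - c * sum u D $ k = sum u A $ k - (\<Sum>j\<in>A. l j *\<^sub>R u j) $ k"
      using l by (simp add: feasible_weights_def)
    also have "\<dots> = (\<Sum>j\<in>A. (1 - l j) * u j $ k)"
      by (simp add: sum_component left_diff_distrib sum_subtractf)
    also have "\<bar>\<dots>\<bar> \<le> (\<Sum>j\<in>A. (1 - l j) * w)"
      using l bound by (intro order_trans[OF sum_abs] sum_mono)
        (auto simp: feasible_weights_def abs_mult intro!: mult_left_mono)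
    also have "\<dots> = (real (card A) - sum l A) * w" by (simp add: sum_subtractf left_diff_distrib sum_distrib_right)
    also have "\<dots> = CARD('m) * w" using l by (simp add: feasible_weights_def)
    finally show ?thesis .
  qed
  ultimately show ?thesis unfolding tube_def by blast
qed

lemma exists_ordering_in_tube:
  fixes u :: "'i \<Rightarrow> real^'m" and w :: real
  assumes "finite D" "A \<subseteq> D" "card A \<le> CARD('m) \<or> steinitz_representable D u A"
    and bound: "\<forall>j\<in>D. \<forall>k. \<bar>u j $ k\<bar> \<le> w" "0 \<le> w"
  shows "\<exists>xs. distinct xs \<and> set xs = A \<and>
           (\<forall>j\<le>length xs. sum u (set (take j xs)) \<in> tube (sum u D) (CARD('m) * w))"
  using assms(2,3)
proof (induction "card A" arbitrary: A)
  case 0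
  then have "A = {}" using finite_subset[OF _ assms(1)] by auto
  then show ?case using sum_in_tube_if_small[of "{}" u w] bound by (intro exI[of _ "[]"]) auto
next
  case (Suc k)
  have fin: "finite A" using Suc.prems(1) assms(1) finite_subset by blast
  have bound_A: "\<forall>j\<in>A. \<forall>k. \<bar>u j $ k\<bar> \<le> w" using Suc.prems(1) bound(1) by blast
  have sum_A: "sum u A \<in> tube (sum u D) (CARD('m) * w)"
    using Suc.prems sum_in_tube_if_small[OF _ bound_A bound(2)]
      sum_in_tube_if_representable[OF assms(1) Suc.prems(1) _ _ bound_A] by fastforce
  obtain i where i: "i \<in> A" "card (A - {i}) \<le> CARD('m) \<or> steinitz_representable D u (A - {i})"
  proof (cases "card A \<le> CARD('m)")
    case True
    have "A \<noteq> {}" using Suc.hyps(2) by auto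
    then obtain i where "i \<in> A" by blast
    then show ?thesis using that True fin by (simp add: le_diff_conv)
  next
    case False
    then have "CARD('m) < card A" "steinitz_representable D u A" using Suc.prems(2) by auto
    then show ?thesis using that steinitz_representable_remove[OF fin] by blast
  qed
  have "card (A - {i}) = k" using i(1) Suc.hyps(2) fin by simp
  then obtain xs where xs: "distinct xs" "set xs = A - {i}"
    "\<forall>j\<le>length xs. sum u (set (take j xs)) \<in> tube (sum u D) (CARD('m) * w)"
    using Suc.hyps(1)[of "A - {i}"] Suc.prems(1) i(2) by blast
  have "sum u (set (take j (xs @ [i]))) \<in> tube (sum u D) (CARD('m) * w)"
    if "j \<le> length (xs @ [i])" for j
  proof (cases "j \<le> length xs")
    case False
    then have "take j (xs @ [i]) = xs @ [i]" using that by simp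
    then show ?thesis using sum_A xs(2) i(1) by (simp add: insert_absorb)
  qed (use xs(3) in simp)
  then show ?case using xs i(1) by (intro exI[of _ "xs @ [i]"]) auto
qed

lemma card_le_card_lattice_tube:
  fixes u :: "'i \<Rightarrow> real^'m" and w :: real
  assumes fin: "finite D" and int: "\<forall>j\<in>D. \<forall>k. u j $ k \<in> \<int>"
    and bound: "\<forall>j\<in>D. \<forall>k. \<bar>u j $ k\<bar> \<le> w" "0 \<le> w"
    and zero_sum_free: "\<And>B. B \<subseteq> D \<Longrightarrow> B \<noteq> {} \<Longrightarrow> sum u B \<noteq> 0"
    and fin_tube: "finite (tube (sum u D) (CARD('m) * w) \<inter> lattice_points)"
  shows "card D + 1 \<le> card (tube (sum u D) (CARD('m) * w) \<inter> lattice_points)"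
proof -
  have "card D \<le> CARD('m) \<or> steinitz_representable D u D"
    by (cases "card D \<le> CARD('m)") (auto intro: steinitz_representable_whole)
  then obtain xs where xs: "distinct xs" "set xs = D"
    "\<forall>j\<le>length xs. sum u (set (take j xs)) \<in> tube (sum u D) (CARD('m) * w)"
    using exists_ordering_in_tube[OF fin order_refl _ bound] by blast
  define h where "h j = sum u (set (take j xs))" for j
  have "h j \<in> lattice_points" for j
    using int xs(2) set_take_subset[of j xs] by (auto simp: h_def lattice_points_def intro!: Ints_sum)
  then have "h ` {..length xs} \<subseteq> tube (sum u D) (CARD('m) * w) \<inter> lattice_points"
    using xs(3) by (auto simp: h_def)
  moreover have "h j \<noteq> h j'" if "j < j'" "j' \<le> length xs" for j j'
  proof -
    define B where "B = set (take (j' - j) (drop j xs))"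
    have "take j' xs = take j xs @ take (j' - j) (drop j xs)"
      using that take_add[of j "j' - j" xs] by simp
    then have "set (take j' xs) = set (take j xs) \<union> B" "set (take j xs) \<inter> B = {}"
      using distinct_take[OF xs(1), of j'] by (auto simp: B_def)
    then have "h j' = h j + sum u B" by (simp add: h_def sum.union_disjoint B_def)
    moreover have "B \<subseteq> set xs" unfolding B_def by (meson order_trans set_drop_subset set_take_subset)
    moreover have "B \<noteq> {}" using that by (simp add: B_def)
    ultimately show ?thesis using zero_sum_free xs(2) by auto
  qed
  then have "inj_on h {..length xs}"
    by (intro inj_onI) (metis atMost_iff linorder_neqE_nat)
  ultimately have "card {..length xs} \<le> card (tube (sum u D) (CARD('m) * w) \<inter> lattice_points)"
    using card_inj_on_le fin_tube by blast
  then show ?thesis using distinct_card[OF xs(1)] xs(2) by simp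
qed

section \<open>Lattice points in a tube around a segment\<close>

lemma card_vec_set:
  fixes S :: "'n::finite \<Rightarrow> 'a set"
  assumes "\<And>k. finite (S k)"
  shows "finite {q::'a^'n. \<forall>k. q$k \<in> S k}" "card {q::'a^'n. \<forall>k. q$k \<in> S k} = (\<Prod>k\<in>UNIV. card (S k))"
proof -
  have eq: "{q::'a^'n. \<forall>k. q$k \<in> S k} = vec_lambda ` PiE UNIV S"
  proof
    show "{q::'a^'n. \<forall>k. q$k \<in> S k} \<subseteq> vec_lambda ` PiE UNIV S"
    proof
      fix q :: "'a^'n" assume "q \<in> {q. \<forall>k. q$k \<in> S k}"
      then have "vec_nth q \<in> PiE UNIV S" by auto
      then show "q \<in> vec_lambda ` PiE UNIV S" by (metis image_eqI vec_nth_inverse)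
    qed
  qed auto
  have "inj_on vec_lambda (PiE UNIV S)" by (intro inj_onI) (simp add: vec_lambda_inject)
  then show "finite {q::'a^'n. \<forall>k. q$k \<in> S k}" "card {q::'a^'n. \<forall>k. q$k \<in> S k} = (\<Prod>k\<in>UNIV. card (S k))"
    unfolding eq using assms by (simp_all add: finite_PiE card_image card_PiE)
qed

lemma card_Ints_interval_le:
  fixes x :: real
  shows "finite (\<int> \<inter> {x - real N..x + real N})" "card (\<int> \<inter> {x - real N..x + real N}) \<le> 2 * N + 1"
proof -
  have sub: "\<int> \<inter> {x - real N..x + real N} \<subseteq> real_of_int ` {\<lceil>x - real N\<rceil>..\<lfloor>x + real N\<rfloor>}"
  proof
    fix y assume "y \<in> \<int> \<inter> {x - real N..x + real N}"
    then obtain z where z: "y = real_of_int z" "x - real N \<le> z" "z \<le> x + real N"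
      by (auto elim!: Ints_cases)
    have "\<lceil>x - real N\<rceil> \<le> z" using z(2) by (simp only: ceiling_le_iff)
    moreover have "z \<le> \<lfloor>x + real N\<rfloor>" using z(3) by (simp only: le_floor_iff)
    ultimately have "z \<in> {\<lceil>x - real N\<rceil>..\<lfloor>x + real N\<rfloor>}" by simp
    then show "y \<in> real_of_int ` {\<lceil>x - real N\<rceil>..\<lfloor>x + real N\<rfloor>}" using z by blast
  qed
  then show "finite (\<int> \<inter> {x - real N..x + real N})" by (rule finite_subset) simp
  have "card (\<int> \<inter> {x - real N..x + real N}) \<le> card (real_of_int ` {\<lceil>x - real N\<rceil>..\<lfloor>x + real N\<rfloor>})"
    using sub by (rule card_mono[rotated]) simp
  also have "\<dots> \<le> card {\<lceil>x - real N\<rceil>..\<lfloor>x + real N\<rfloor>}" by (rule card_image_le) simp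
  also have "\<dots> = nat (\<lfloor>x + real N\<rfloor> + 1 - \<lceil>x - real N\<rceil>)" by simp
  also have "\<lfloor>x + real N\<rfloor> = \<lfloor>x\<rfloor> + int N" by (metis floor_add_int of_int_of_nat_eq)
  also have "\<lceil>x - real N\<rceil> = \<lceil>x\<rceil> - int N" by (metis ceiling_diff_of_int of_int_of_nat_eq)
  also have "nat (\<lfloor>x\<rfloor> + int N + 1 - (\<lceil>x\<rceil> - int N)) \<le> 2 * N + 1"
    using floor_le_ceiling[of x] by linarith
  finally show "card (\<int> \<inter> {x - real N..x + real N}) \<le> 2 * N + 1" .
qed

definition lattice_box :: "real^'m \<Rightarrow> nat \<Rightarrow> (real^'m) set" where
  "lattice_box p N = {q. \<forall>k. q$k \<in> \<int> \<inter> {p$k - real N..p$k + real N}}"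

lemma card_lattice_box_le:
  "finite (lattice_box p N)" "card (lattice_box (p::real^'m) N) \<le> (2 * N + 1) ^ CARD('m)"
proof -
  have "card (lattice_box p N) = (\<Prod>k\<in>UNIV. card (\<int> \<inter> {p$k - real N..p$k + real N}))"
    unfolding lattice_box_def by (rule card_vec_set) (rule card_Ints_interval_le)
  also have "\<dots> \<le> (\<Prod>k\<in>(UNIV::'m set). 2 * N + 1)"
    by (intro prod_mono conjI le0 card_Ints_interval_le(2))
  finally show "card (lattice_box p N) \<le> (2 * N + 1) ^ CARD('m)" by simp
  show "finite (lattice_box p N)"
    unfolding lattice_box_def by (rule card_vec_set) (rule card_Ints_interval_le)
qed

lemma card_lattice_box_slice_le:
  fixes p :: "real^'m"
  shows "finite {q \<in> lattice_box p N. q$i = a}"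
    "card {q \<in> lattice_box p N. q$i = a} \<le> (2 * N + 1) ^ (CARD('m) - 1)"
proof -
  define S where "S k = (if k = i then {a} else \<int> \<inter> {p$k - real N..p$k + real N})" for k
  have S: "finite (S k)" "card (S k) \<le> (if k = i then 1 else 2 * N + 1)" for k
    using card_Ints_interval_le[of "p$k" N] by (simp_all add: S_def)
  have sub: "{q \<in> lattice_box p N. q$i = a} \<subseteq> {q. \<forall>k. q$k \<in> S k}"
    by (auto simp: lattice_box_def S_def)
  have fin: "finite {q::real^'m. \<forall>k. q$k \<in> S k}" by (rule card_vec_set(1)) (rule S(1))
  then show "finite {q \<in> lattice_box p N. q$i = a}" using sub by (rule finite_subset[rotated])
  have "card {q \<in> lattice_box p N. q$i = a} \<le> card {q::real^'m. \<forall>k. q$k \<in> S k}"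
    using fin sub by (rule card_mono)
  also have "\<dots> = (\<Prod>k\<in>UNIV. card (S k))" by (rule card_vec_set(2)) (rule S(1))
  also have "\<dots> \<le> (\<Prod>k\<in>UNIV. if k = i then 1 else 2 * N + 1)"
    by (intro prod_mono conjI le0 S(2))
  also have "\<dots> = (\<Prod>k\<in>UNIV - {i}. 2 * N + 1)"
    by (rule prod.mono_neutral_cong_right) auto
  also have "\<dots> = (2 * N + 1) ^ (CARD('m) - 1)" by (simp add: card_Diff_singleton)
  finally show "card {q \<in> lattice_box p N. q$i = a} \<le> (2 * N + 1) ^ (CARD('m) - 1)" .
qed

lemma abs_diff_mult_le_iff:
  fixes q r c N :: real
  assumes "r \<noteq> 0"
  shows "\<bar>q - c * r\<bar> \<le> N \<longleftrightarrow> (q - N * sgn r) / r \<le> c \<and> c \<le> (q + N * sgn r) / r"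
proof (cases "r > 0")
  case True
  then show ?thesis by (simp add: abs_le_iff pos_divide_le_eq pos_le_divide_eq algebra_simps)
next
  case False
  then have "r < 0" using assms by simp
  then show ?thesis by (auto simp: abs_le_iff neg_divide_le_eq neg_le_divide_eq algebra_simps)
qed

lemma tube_least_parameter:
  assumes "q \<in> tube r N"
  obtains c where "c \<in> {0..1}" "\<forall>k. \<bar>q$k - c * r$k\<bar> \<le> N"
    "c = 0 \<or> (\<exists>i. r$i \<noteq> 0 \<and> q$i = c * r$i + N * sgn (r$i))"
proof -
  obtain c0 where c0: "c0 \<in> {0..1}" "\<forall>k. \<bar>q$k - c0 * r$k\<bar> \<le> N"
    using assms by (auto simp: tube_def)
  define lo where "lo k = (if r$k = 0 then 0 else (q$k - N * sgn (r$k)) / r$k)" for k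
  define c where "c = Max (insert 0 (range lo))"
  have lo_le: "lo k \<le> c" for k unfolding c_def by (rule Max_ge) auto
  have "lo k \<le> c0" for k
    using c0 abs_diff_mult_le_iff[of "r$k" "q$k" c0 N] by (auto simp: lo_def)
  then have "c \<le> c0" using c0(1) unfolding c_def by (subst Max_le_iff) auto
  moreover have "0 \<le> c" unfolding c_def by (rule Max_ge) auto
  ultimately have c: "c \<in> {0..1}" using c0(1) by auto
  have bound: "\<forall>k. \<bar>q$k - c * r$k\<bar> \<le> N"
  proof
    fix k show "\<bar>q$k - c * r$k\<bar> \<le> N"
    proof (cases "r$k = 0")
      case False
      then have "c0 \<le> (q$k + N * sgn (r$k)) / r$k"
        using c0(2) abs_diff_mult_le_iff[of "r$k" "q$k" c0 N] by blast
      then show ?thesis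
        using lo_le[of k] \<open>c \<le> c0\<close> False abs_diff_mult_le_iff[of "r$k" "q$k" c N] by (simp add: lo_def)
    qed (use spec[OF c0(2), of k] in simp)
  qed
  have "c \<in> insert 0 (range lo)" unfolding c_def by (rule Max_in) auto
  then have "c = 0 \<or> (\<exists>i. r$i \<noteq> 0 \<and> q$i = c * r$i + N * sgn (r$i))"
  proof
    assume "c \<in> range lo"
    then obtain i where i: "c = lo i" by blast
    show ?thesis
    proof (cases "r$i = 0")
      case False
      then have "q$i = c * r$i + N * sgn (r$i)" using i by (simp add: lo_def)
      then show ?thesis using False by blast
    qed (use i in \<open>simp add: lo_def\<close>)
  qed simp
  with c bound show ?thesis by (rule that)
qed

text \<open>At its least parameter c a lattice point of the tube either lies near 0 or has a coordinate i
  pinned to the boundary; then c |r_i| is an integer between 1 and |r_i|, so the point lies in one of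
  at most |r_i| slices of codimension one.\<close>
lemma lattice_tube_subset:
  fixes r :: "real^'m"
  assumes r: "\<forall>k. r$k \<in> \<int>"
  shows "tube r (real N) \<inter> lattice_points \<subseteq> lattice_box 0 N \<union>
    (\<Union>i. \<Union>b\<in>{1..nat \<lfloor>\<bar>r$i\<bar>\<rfloor>}. {q \<in> lattice_box ((real b / \<bar>r$i\<bar>) *\<^sub>R r) N.
        q$i = real b / \<bar>r$i\<bar> * r$i + N * sgn (r$i)})"
proof
  fix q assume q: "q \<in> tube r (real N) \<inter> lattice_points"
  then have "q \<in> tube r (real N)" by simp
  then obtain c where c: "c \<in> {0..1}" "\<forall>k. \<bar>q$k - c * r$k\<bar> \<le> N"
    "c = 0 \<or> (\<exists>i. r$i \<noteq> 0 \<and> q$i = c * r$i + N * sgn (r$i))"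
    by (rule tube_least_parameter)
  have q_int: "q$k \<in> \<int>" for k using q by (simp add: lattice_points_def)
  have "q$k \<in> \<int> \<inter> {(c *\<^sub>R r)$k - real N..(c *\<^sub>R r)$k + real N}" for k
    using q_int[of k] spec[OF c(2), of k] by (auto simp: abs_le_iff)
  then have box: "q \<in> lattice_box (c *\<^sub>R r) N" by (simp add: lattice_box_def)
  show "q \<in> lattice_box 0 N \<union> (\<Union>i. \<Union>b\<in>{1..nat \<lfloor>\<bar>r$i\<bar>\<rfloor>}.
      {q \<in> lattice_box ((real b / \<bar>r$i\<bar>) *\<^sub>R r) N. q$i = real b / \<bar>r$i\<bar> * r$i + N * sgn (r$i)})"
  proof (cases "c = 0")
    case False
    then obtain i where i: "r$i \<noteq> 0" "q$i = c * r$i + N * sgn (r$i)" using c(3) by blast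
    have "c * \<bar>r$i\<bar> = (q$i - N * sgn (r$i)) * sgn (r$i)"
      using i by (cases "r$i > 0") (auto simp: algebra_simps)
    also have "\<dots> \<in> \<int>" using q_int[of i] by (intro Ints_mult Ints_diff) (auto simp: sgn_if)
    finally have "c * \<bar>r$i\<bar> \<in> \<nat>" using c(1) by (simp add: Nats_altdef2)
    then obtain b where b: "c * \<bar>r$i\<bar> = real b" by (auto elim: Nats_cases)
    have "0 < c * \<bar>r$i\<bar>" using False c(1) i(1) by auto
    then have "0 < b" using b by simp
    moreover have "c * \<bar>r$i\<bar> \<le> \<bar>r$i\<bar>" using c(1) by (simp add: mult_left_le_one_le)
    then have "b \<le> nat \<lfloor>\<bar>r$i\<bar>\<rfloor>" using b by (simp add: le_nat_floor)
    moreover have "c = real b / \<bar>r$i\<bar>" using b i(1) by (simp add: field_simps)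
    ultimately show ?thesis using box i(2) by auto
  qed (use box in simp)
qed

lemma card_lattice_tube_le:
  fixes r :: "real^'m"
  assumes r: "\<forall>k. r$k \<in> \<int>"
  shows "finite (tube r (real N) \<inter> lattice_points)"
    "real (card (tube r (real N) \<inter> lattice_points))
       \<le> (2 * real N + 1) ^ CARD('m) + norm1 r * (2 * real N + 1) ^ (CARD('m) - 1)"
proof -
  define slice where "slice i b = {q \<in> lattice_box ((real b / \<bar>r$i\<bar>) *\<^sub>R r) N.
      q$i = real b / \<bar>r$i\<bar> * r$i + N * sgn (r$i)}" for i b
  define U where "U = (\<Union>i. \<Union>b\<in>{1..nat \<lfloor>\<bar>r$i\<bar>\<rfloor>}. slice i b)"
  have sub: "tube r (real N) \<inter> lattice_points \<subseteq> lattice_box 0 N \<union> U"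
    using lattice_tube_subset[OF r] by (simp add: U_def slice_def)
  have fin_slice: "finite (slice i b)" for i b
    unfolding slice_def by (rule card_lattice_box_slice_le(1))
  then have fin: "finite (lattice_box 0 N \<union> U)"
    by (simp add: U_def card_lattice_box_le(1))
  then show "finite (tube r (real N) \<inter> lattice_points)" using sub by (rule finite_subset[rotated])
  have "card (tube r (real N) \<inter> lattice_points) \<le> card (lattice_box 0 N \<union> U)"
    using fin sub by (rule card_mono)
  also have "\<dots> \<le> card (lattice_box (0::real^'m) N) + card U" by (rule card_Un_le)
  also have "card U \<le> (\<Sum>i\<in>UNIV. \<Sum>b\<in>{1..nat \<lfloor>\<bar>r$i\<bar>\<rfloor>}. card (slice i b))"
    unfolding U_def using fin_slice
    by (intro order_trans[OF card_UN_le] sum_mono card_UN_le) auto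
  also have "\<dots> \<le> (\<Sum>i\<in>UNIV. \<Sum>b\<in>{1..nat \<lfloor>\<bar>r$i\<bar>\<rfloor>}. (2 * N + 1) ^ (CARD('m) - 1))"
    unfolding slice_def by (intro sum_mono card_lattice_box_slice_le(2))
  finally have "card (tube r (real N) \<inter> lattice_points)
      \<le> (2 * N + 1) ^ CARD('m) + (\<Sum>i\<in>UNIV. nat \<lfloor>\<bar>r$i\<bar>\<rfloor> * (2 * N + 1) ^ (CARD('m) - 1))"
    using card_lattice_box_le(2)[of "0::real^'m" N] by simp
  then have "real (card (tube r (real N) \<inter> lattice_points))
      \<le> real ((2 * N + 1) ^ CARD('m) + (\<Sum>i\<in>UNIV. nat \<lfloor>\<bar>r$i\<bar>\<rfloor> * (2 * N + 1) ^ (CARD('m) - 1)))"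
    by (simp only: of_nat_le_iff)
  also have "\<dots> = (2 * real N + 1) ^ CARD('m) + norm1 r * (2 * real N + 1) ^ (CARD('m) - 1)"
  proof -
    have rr: "real (nat \<lfloor>\<bar>r$i\<bar>\<rfloor>) = \<bar>r$i\<bar>" for i
      using r by (metis Ints_abs Ints_cases abs_ge_zero floor_of_int of_int_0_le_iff of_nat_nat)
    show ?thesis
      by (simp only: of_nat_add of_nat_sum of_nat_mult of_nat_power rr)
        (simp add: norm1_def sum_distrib_right)
  qed
  finally show "real (card (tube r (real N) \<inter> lattice_points))
       \<le> (2 * real N + 1) ^ CARD('m) + norm1 r * (2 * real N + 1) ^ (CARD('m) - 1)" .
qed

lemma card_zero_sum_free_le:
  fixes u :: "'i \<Rightarrow> real^'m"
  assumes "finite D" "\<forall>j\<in>D. \<forall>k. u j $ k \<in> \<int>" "\<forall>j\<in>D. \<forall>k. \<bar>u j $ k\<bar> \<le> real N"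
    and "\<And>B. B \<subseteq> D \<Longrightarrow> B \<noteq> {} \<Longrightarrow> sum u B \<noteq> 0"
  shows "real (card D) + 1 \<le> (2 * real (CARD('m) * N) + 1) ^ CARD('m)
           + norm1 (sum u D) * (2 * real (CARD('m) * N) + 1) ^ (CARD('m) - 1)"
proof -
  have "\<forall>k. sum u D $ k \<in> \<int>" using assms(2) by (auto simp: sum_component intro: Ints_sum)
  note count = card_lattice_tube_le[OF this, of "CARD('m) * N"]
  have "card D + 1 \<le> card (tube (sum u D) (real CARD('m) * real N) \<inter> lattice_points)"
    by (rule card_le_card_lattice_tube[OF assms(1,2,3)]) (use assms(4) count(1) in auto)
  then have "real (card D) + 1 \<le> real (card (tube (sum u D) (real (CARD('m) * N)) \<inter> lattice_points))"
    by (simp flip: of_nat_le_iff)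
  with count(2) show ?thesis by linarith
qed

section \<open>Smooth minimization over the image of the unit box\<close>

lemma unit_box_eq_cbox: "unit_box = cbox (0::real^'n) 1"
  by (auto simp: unit_box_def mem_box_cart)

lemma convex_image_unit_box: "convex ((*v) (A::real^'n^'m) ` unit_box)"
  unfolding unit_box_eq_cbox by (intro convex_linear_image) auto

lemma finite_binary_points: "finite (binary_points :: (real^'n) set)"
proof -
  have "finite {q::real^'n. \<forall>k. q$k \<in> {0, 1}}" by (rule card_vec_set(1)) simp
  then show ?thesis unfolding binary_points_def by (rule finite_subset[rotated]) auto
qed

lemma binary_points_subset_unit_box: "binary_points \<subseteq> unit_box"
proof
  fix x :: "real^'n" assume "x \<in> binary_points"
  then have "x$i = 0 \<or> x$i = 1" for i by (simp add: binary_points_def)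
  then have "0 \<le> x$i \<and> x$i \<le> 1" for i by (metis order.refl zero_le_one)
  then show "x \<in> unit_box" by (simp add: unit_box_def)
qed

lemma matrix_vector_mult_axis: "(A::real^'n^'m) *v axis j 1 = column j A"
  by (simp add: cart_eq_inner_axis column_def matrix_mult_dot)

lemma lipschitz_const_nonneg:
  assumes lipschitz: "\<And>u v. u \<in> P \<Longrightarrow> v \<in> P \<Longrightarrow> norminf (g' u - g' v) \<le> L * norm1 (u - v)"
    and "u \<in> P" "v \<in> P" "u \<noteq> v"
  shows "0 \<le> L"
proof -
  have "0 \<le> L * norm1 (u - v)"
    using lipschitz[OF assms(2,3)] norminf_nonneg[of "g' u - g' v"] by linarith
  moreover have "0 < norm1 (u - v)"
    using assms(4) norm1_nonneg[of "u - v"] norm1_eq_0_iff[of "u - v"] by simp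
  ultimately show ?thesis by (simp add: zero_le_mult_iff)
qed

lemma descent_lemma:
  fixes g :: "real^'m \<Rightarrow> real"
  assumes "convex P" "u \<in> P" "v \<in> P"
    and grad: "\<And>u. u \<in> P \<Longrightarrow> (g has_derivative (\<lambda>h. g' u \<bullet> h)) (at u within P)"
    and lipschitz: "\<And>u v. u \<in> P \<Longrightarrow> v \<in> P \<Longrightarrow> norminf (g' u - g' v) \<le> L * norm1 (u - v)"
  shows "g v - g u \<le> g' u \<bullet> (v - u) + L * (norm1 (v - u))\<^sup>2"
proof (cases "u = v")
  case False
  then have L: "0 \<le> L" using lipschitz_const_nonneg[OF lipschitz assms(2,3)] by blast
  define \<gamma> where "\<gamma> s = u + s *\<^sub>R (v - u)" for s
  have \<gamma>_in: "\<gamma> s \<in> P" if "s \<in> {0..1}" for s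
    using convexD[OF assms(1,2,3), of "1 - s" s] that by (simp add: \<gamma>_def algebra_simps)
  have "(\<gamma> has_derivative (\<lambda>h. h *\<^sub>R (v - u))) (at s within {0..1})" for s
    unfolding \<gamma>_def by (auto intro!: derivative_eq_intros)
  then have "((\<lambda>s. g (\<gamma> s)) has_derivative (\<lambda>h. g' (\<gamma> s) \<bullet> (h *\<^sub>R (v - u)))) (at s within {0..1})"
    if "s \<in> {0..1}" for s
    using \<gamma>_in that by (intro has_derivative_in_compose2[OF grad]) auto
  then have "\<exists>\<xi>\<in>{0..1}. g (\<gamma> 1) - g (\<gamma> 0) = g' (\<gamma> \<xi>) \<bullet> ((1 - 0) *\<^sub>R (v - u))"
    by (intro mvt_very_simple) auto
  then obtain \<xi> where \<xi>: "\<xi> \<in> {0..1}" "g (\<gamma> 1) - g (\<gamma> 0) = g' (\<gamma> \<xi>) \<bullet> (v - u)"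
    by auto
  have "(g' (\<gamma> \<xi>) - g' u) \<bullet> (v - u) \<le> norminf (g' (\<gamma> \<xi>) - g' u) * norm1 (v - u)"
    by (rule inner_le_norminf_norm1)
  also have "\<dots> \<le> L * norm1 (\<gamma> \<xi> - u) * norm1 (v - u)"
    using lipschitz[OF \<gamma>_in[OF \<xi>(1)] assms(2)] by (intro mult_right_mono norm1_nonneg)
  also have "\<dots> = L * \<xi> * (norm1 (v - u))\<^sup>2"
    using \<xi>(1) by (simp add: \<gamma>_def norm1_scaleR power2_eq_square)
  also have "\<dots> \<le> L * (norm1 (v - u))\<^sup>2"
    using \<xi>(1) L by (intro mult_right_mono mult_left_le) auto
  finally show ?thesis using \<xi>(2) by (simp add: \<gamma>_def inner_diff_left)
qed (simp add: norm1_def)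

lemma stationary_fractional_coordinate:
  fixes A :: "real^'n^'m"
  defines "P \<equiv> (*v) A ` unit_box"
  assumes grad: "\<And>u. u \<in> P \<Longrightarrow> (g has_derivative (\<lambda>h. g' u \<bullet> h)) (at u within P)"
    and x: "x \<in> unit_box" and min: "\<forall>y\<in>unit_box. g (A *v x) \<le> g (A *v y)"
    and j: "0 < x$j" "x$j < 1"
  shows "g' (A *v x) \<bullet> column j A = 0"
proof -
  define \<epsilon> where "\<epsilon> = min (x$j) (1 - x$j)"
  define f where "f t = A *v (x + t *\<^sub>R axis j 1)" for t
  have f_eq: "f t = A *v x + t *\<^sub>R column j A" for t
    by (simp add: f_def matrix_vector_right_distrib matrix_vector_mult_scaleR matrix_vector_mult_axis)
  have box: "x + t *\<^sub>R axis j 1 \<in> unit_box" if "t \<in> {-\<epsilon><..<\<epsilon>}" for t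
    using x that by (auto simp: unit_box_def axis_def \<epsilon>_def)
  then have "f ` {-\<epsilon><..<\<epsilon>} \<subseteq> P" by (auto simp: f_def P_def)
  moreover have "0 \<in> {-\<epsilon><..<\<epsilon>}" using j by (simp add: \<epsilon>_def)
  moreover have "(f has_derivative (\<lambda>h. h *\<^sub>R column j A)) (at 0 within {-\<epsilon><..<\<epsilon>})"
    unfolding f_eq by (auto intro!: derivative_eq_intros)
  ultimately have "((\<lambda>t. g (f t)) has_derivative (\<lambda>h. g' (f 0) \<bullet> (h *\<^sub>R column j A)))
      (at 0 within {-\<epsilon><..<\<epsilon>})"
    by (intro has_derivative_in_compose2[OF grad])
  moreover have "(\<lambda>h. g' (f 0) \<bullet> (h *\<^sub>R column j A)) = (*) (g' (A *v x) \<bullet> column j A)"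
    by (simp add: fun_eq_iff f_eq)
  ultimately have "((\<lambda>t. g (f t)) has_field_derivative g' (A *v x) \<bullet> column j A) (at 0)"
    using at_within_open[OF \<open>0 \<in> {-\<epsilon><..<\<epsilon>}\<close> open_greaterThanLessThan]
    by (simp add: has_field_derivative_def)
  moreover have "0 < \<epsilon>" using j by (simp add: \<epsilon>_def)
  moreover have "\<forall>t. \<bar>0 - t\<bar> < \<epsilon> \<longrightarrow> g (f 0) \<le> g (f t)"
    using min box by (auto simp: f_def abs_less_iff)
  ultimately show ?thesis by (rule DERIV_local_min)
qed

section \<open>Proximity\<close>

lemma sum_restrict_vec:
  fixes S :: "'n::finite set"
  assumes "\<And>j. f j 0 = 0"
  shows "(\<Sum>j\<in>UNIV. f j ((\<chi> j. if j \<in> S then v$j else 0) $ j)) = (\<Sum>j\<in>S. f j (v$j))"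
  using sum.inter_restrict[of UNIV "\<lambda>j. f j (v$j)" S] assms by (simp add: if_distrib cong: if_cong)

lemma matrix_vector_mult_restrict:
  "(A::real^'n^'m) *v (\<chi> j. if j \<in> S then v$j else 0) = (\<Sum>j\<in>S. v$j *\<^sub>R column j A)"
  unfolding matrix_vector_mult_eq_sum_columns by (rule sum_restrict_vec) simp

lemma norm1_restrict:
  "norm1 (\<chi> j. if j \<in> S then v$j else 0) = (\<Sum>j\<in>S. \<bar>v$j\<bar>)"
  unfolding norm1_def by (rule sum_restrict_vec) simp

definition round_binary :: "real^'n \<Rightarrow> real^'n" where
  "round_binary x = (\<chi> j. if 1/2 \<le> x$j then 1 else 0)"

lemma round_binary_in_binary_points: "round_binary x \<in> binary_points"
  by (simp add: round_binary_def binary_points_def)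

lemma round_binary_diff_eq:
  "round_binary x - x = (\<chi> j. if j \<in> fractional_entries x then (round_binary x - x)$j else 0)"
  by (auto simp: vec_eq_iff round_binary_def fractional_entries_def)

lemma norm1_round_binary_diff_le:
  assumes "x \<in> unit_box"
  shows "norm1 (round_binary x - x) \<le> card (fractional_entries x) / 2"
proof -
  have "\<bar>(round_binary x - x)$j\<bar> \<le> 1/2" for j
    using assms by (auto simp: round_binary_def unit_box_def)
  then have "(\<Sum>j\<in>fractional_entries x. \<bar>(round_binary x - x)$j\<bar>) \<le> card (fractional_entries x) * (1/2)"
    by (intro sum_bounded_above) auto
  then show ?thesis by (subst round_binary_diff_eq) (simp add: norm1_restrict)
qed

lemma rounding_gap:
  fixes A :: "real^'n^'m" and w :: real
  defines "P \<equiv> (*v) A ` unit_box"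
  assumes grad: "\<And>u. u \<in> P \<Longrightarrow> (g has_derivative (\<lambda>h. g' u \<bullet> h)) (at u within P)"
    and lipschitz: "\<And>u v. u \<in> P \<Longrightarrow> v \<in> P \<Longrightarrow> norminf (g' u - g' v) \<le> L * norm1 (u - v)"
    and L: "0 \<le> L" and entries: "\<And>i j. \<bar>A $ i $ j\<bar> \<le> w"
    and x: "x \<in> unit_box" and min: "\<forall>y\<in>unit_box. g (A *v x) \<le> g (A *v y)"
  shows "g (A *v round_binary x) \<le> g (A *v x) + L * (CARD('m) * w * (card (fractional_entries x) / 2))\<^sup>2"
proof -
  let ?z = "round_binary x"
  have "g (A *v ?z) - g (A *v x) \<le> g' (A *v x) \<bullet> (A *v ?z - A *v x) + L * (norm1 (A *v ?z - A *v x))\<^sup>2"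
    using binary_points_subset_unit_box round_binary_in_binary_points
    by (intro descent_lemma[OF _ _ _ grad lipschitz]) (auto simp: P_def convex_image_unit_box x)
  moreover have "g' (A *v x) \<bullet> (A *v ?z - A *v x) = 0"
  proof -
    have "A *v ?z - A *v x = A *v (\<chi> j. if j \<in> fractional_entries x then (?z - x)$j else 0)"
      by (simp add: matrix_vector_mult_diff_distrib flip: round_binary_diff_eq)
    also have "\<dots> = (\<Sum>j\<in>fractional_entries x. (?z - x)$j *\<^sub>R column j A)"
      by (rule matrix_vector_mult_restrict)
    finally have "A *v ?z - A *v x = (\<Sum>j\<in>fractional_entries x. (?z - x)$j *\<^sub>R column j A)" .
    moreover have "g' (A *v x) \<bullet> column j A = 0" if "j \<in> fractional_entries x" for j
      using that x by (intro stationary_fractional_coordinate[OF grad[unfolded P_def] x min])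
        (auto simp: fractional_entries_def unit_box_def less_le)
    ultimately show ?thesis by (simp add: inner_sum_right)
  qed
  moreover have "norm1 (A *v ?z - A *v x) \<le> CARD('m) * w * (card (fractional_entries x) / 2)"
  proof -
    have "0 \<le> w" using entries abs_ge_zero order_trans by blast
    then have "norm1 (A *v (?z - x)) \<le> CARD('m) * w * norm1 (?z - x)"
      using norm1_matrix_vector_le[OF entries] by blast
    also have "\<dots> \<le> CARD('m) * w * (card (fractional_entries x) / 2)"
      using norm1_round_binary_diff_le[OF x] \<open>0 \<le> w\<close> by (intro mult_left_mono) auto
    finally show ?thesis by (simp add: matrix_vector_mult_diff_distrib)
  qed
  then have "(norm1 (A *v ?z - A *v x))\<^sup>2 \<le> (CARD('m) * w * (card (fractional_entries x) / 2))\<^sup>2"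
    by (intro power_mono norm1_nonneg)
  ultimately show ?thesis using L mult_left_mono by fastforce
qed

lemma binary_rounding_gap:
  fixes W :: "int^'n^'m"
  defines "P \<equiv> (*v) (realmat W) ` unit_box"
  assumes grad: "\<And>u. u \<in> P \<Longrightarrow> (g has_derivative (\<lambda>h. g' u \<bullet> h)) (at u within P)"
    and lipschitz: "\<And>u v. u \<in> P \<Longrightarrow> v \<in> P \<Longrightarrow> norminf (g' u - g' v) \<le> L * norm1 (u - v)"
    and x: "x \<in> unit_box" and min: "\<forall>y\<in>unit_box. g (realmat W *v x) \<le> g (realmat W *v y)"
    and few: "card (fractional_entries x) \<le> CARD('m)"
  shows "g (realmat W *v round_binary x)
           \<le> g (realmat W *v x) + real CARD('m) ^ 4 * (L / 4) * matinf W ^ 2"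
proof (cases "W = 0")
  case True
  then have "realmat W = 0" "matinf W = 0" by (simp_all add: vec_eq_iff matinf_eq_0_iff)
  then show ?thesis by simp
next
  case False
  then obtain i j where "W $ i $ j \<noteq> 0" by (auto simp: vec_eq_iff)
  then have "realmat W *v axis j 1 \<noteq> realmat W *v 0"
    by (auto simp: matrix_vector_mult_axis column_def vec_eq_iff)
  moreover have "realmat W *v axis j 1 \<in> P" "realmat W *v 0 \<in> P"
    unfolding P_def by (intro imageI; auto simp: unit_box_def axis_def)+
  ultimately have L: "0 \<le> L" by (intro lipschitz_const_nonneg[OF lipschitz]) auto
  have "g (realmat W *v round_binary x)
      \<le> g (realmat W *v x) + L * (CARD('m) * matinf W * (card (fractional_entries x) / 2))\<^sup>2"
    by (rule rounding_gap[OF grad[unfolded P_def] lipschitz[unfolded P_def] L abs_le_matinf x min])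
  also have "\<dots> \<le> g (realmat W *v x) + L * (CARD('m) * matinf W * (CARD('m) / 2))\<^sup>2"
    using few L matinf_in_Nats[of W]
    by (intro add_left_mono mult_left_mono power_mono mult_left_mono) (auto elim: Nats_cases)
  also have "\<dots> = g (realmat W *v x) + real CARD('m) ^ 4 * (L / 4) * matinf W ^ 2"
    by (simp add: power2_eq_square power4_eq_xxxx)
  finally show ?thesis .
qed

lemma rpow_mono:
  assumes "0 \<le> a" "a \<le> b" "0 \<le> t"
  shows "rpow a t \<le> rpow b t"
  using assms by (auto simp: rpow_def powr_mono2)

lemma sharp_norm1_le:
  assumes sharp: "sharp P g \<mu> \<theta>" and "u \<in> P" "u' \<in> P"
    and min: "\<forall>y\<in>P. g u' \<le> g y" and gap: "g u \<le> g u' + X"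
  shows "norm1 (u - u') \<le> 2 * \<mu> * rpow X \<theta>"
proof -
  obtain v where v: "v \<in> P" "\<forall>y\<in>P. g v \<le> g y" "\<forall>y\<in>P. norm1 (y - v) \<le> \<mu> * rpow (g y - g v) \<theta>"
    and \<mu>: "0 < \<mu>" and \<theta>: "0 \<le> \<theta>"
    using sharp by (auto simp: sharp_def)
  have "g u' = g v" using min v(1,2) \<open>u' \<in> P\<close> by (simp add: order_antisym)
  have near: "norm1 (y - v) \<le> \<mu> * rpow X \<theta>" if "y \<in> P" "g y \<le> g v + X" for y
  proof -
    have "norm1 (y - v) \<le> \<mu> * rpow (g y - g v) \<theta>" using v(3) that(1) by blast
    also have "\<dots> \<le> \<mu> * rpow X \<theta>"
      using v(2) that \<mu> \<theta> by (intro mult_left_mono rpow_mono) auto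
    finally show ?thesis .
  qed
  have "0 \<le> X" using gap min \<open>u \<in> P\<close> by fastforce
  have "norm1 (u - u') \<le> norm1 (u - v) + norm1 (u' - v)"
    using norm1_triangle[of "u - v" "v - u'"] by (simp add: norm1_minus_commute[of v u'])
  moreover have "norm1 (u - v) \<le> \<mu> * rpow X \<theta>"
    using \<open>u \<in> P\<close> gap \<open>g u' = g v\<close> by (intro near) simp_all
  moreover have "norm1 (u' - v) \<le> \<mu> * rpow X \<theta>"
    using \<open>u' \<in> P\<close> \<open>0 \<le> X\<close> \<open>g u' = g v\<close> by (intro near) simp_all
  ultimately show ?thesis by simp
qed

lemma exists_min_on_finite:
  fixes f :: "'a \<Rightarrow> real"
  assumes "finite S" "S \<noteq> {}"
  obtains x where "x \<in> S" "\<forall>y\<in>S. f x \<le> f y"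
  using ex_is_arg_min_if_finite[OF assms, of f] by (auto simp: is_arg_min_linorder)

lemma exists_closest_binary_minimizer:
  fixes A :: "real^'n^'m" and f :: "real^'m \<Rightarrow> real"
  obtains z where "z \<in> binary_points" "\<forall>y\<in>binary_points. f (A *v z) \<le> f (A *v y)"
    "\<forall>z'\<in>binary_points. A *v z' = A *v z \<longrightarrow> norm1 (z - x) \<le> norm1 (z' - x)"
proof -
  have "(0::real^'n) \<in> binary_points" by (simp add: binary_points_def)
  then obtain z0 where z0: "z0 \<in> binary_points" "\<forall>y\<in>binary_points. f (A *v z0) \<le> f (A *v y)"
    using exists_min_on_finite[OF finite_binary_points, of "\<lambda>y. f (A *v y)"] by blast
  define Z where "Z = {z \<in> binary_points. A *v z = A *v z0}"
  have "finite Z" "Z \<noteq> {}" using finite_binary_points z0(1) by (auto simp: Z_def)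
  then obtain z where "z \<in> Z" "\<forall>z'\<in>Z. norm1 (z - x) \<le> norm1 (z' - x)"
    by (rule exists_min_on_finite)
  then show ?thesis using that z0 by (auto simp: Z_def)
qed

lemma closest_binary_zero_sum_free:
  fixes A :: "real^'n^'m"
  assumes z: "z \<in> binary_points"
    and closest: "\<forall>z'\<in>binary_points. A *v z' = A *v z \<longrightarrow> norm1 (z - x) \<le> norm1 (z' - x)"
    and B: "B \<subseteq> {j. (x$j = 0 \<or> x$j = 1) \<and> z$j \<noteq> x$j}" "B \<noteq> {}"
  shows "(\<Sum>j\<in>B. (z$j - x$j) *\<^sub>R column j A) \<noteq> 0"
proof
  assume zero: "(\<Sum>j\<in>B. (z$j - x$j) *\<^sub>R column j A) = 0"
  define z' where "z' = (\<chi> j. if j \<in> B then x$j else z$j)"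
  have z_z': "z - z' = (\<chi> j. if j \<in> B then (z - x)$j else 0)"
    by (simp add: vec_eq_iff z'_def)
  have "z' \<in> binary_points" using z B(1) by (auto simp: binary_points_def z'_def)
  moreover have "A *v z - A *v z' = (\<Sum>j\<in>B. (z - x)$j *\<^sub>R column j A)"
    by (simp only: matrix_vector_mult_diff_distrib[symmetric] z_z' matrix_vector_mult_restrict)
  then have "A *v z' = A *v z" using zero by simp
  moreover have "norm1 (z - x) = norm1 (z' - x) + card B"
  proof -
    have "\<bar>z$j - x$j\<bar> = \<bar>z'$j - x$j\<bar> + (if j \<in> B then 1 else 0)" for j
    proof (cases "j \<in> B")
      case True
      then have "x$j = 0 \<or> x$j = 1" "z$j \<noteq> x$j" using B(1) by auto
      moreover have "z$j = 0 \<or> z$j = 1" using z by (simp add: binary_points_def)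
      ultimately show ?thesis using True by (auto simp: z'_def)
    qed (simp add: z'_def)
    then show ?thesis by (simp add: norm1_def sum.distrib sum.If_cases)
  qed
  moreover have "0 < card B" using B(2) by (simp add: card_gt_0_iff)
  ultimately show False using closest by force
qed

lemma proximity_arithmetic:
  fixes m N d :: nat and K S \<rho> :: real
  assumes count: "real d + 1 \<le> K ^ m + S * K ^ (m - 1)"
    and K: "K = 2 * real m * real N + 1" and m: "1 \<le> m"
    and S: "S \<le> 2 * \<rho> + real m ^ 2 * real N" "N = 0 \<Longrightarrow> S = 0" and \<rho>: "0 \<le> \<rho>"
  shows "real d + real m \<le> (\<rho> + real m + 2) * K ^ m"
proof (cases "N = 0")
  case True
  then show ?thesis using count K S(2) \<rho> by simp
next
  case False
  define P where "P = K ^ (m - 1)"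
  have K_pow: "K ^ m = K * P" using m by (simp add: P_def power_eq_if)
  have "1 \<le> m * N" using False m by (simp add: Suc_le_eq)
  then have "1 \<le> real m * real N" by (metis of_nat_1 of_nat_le_iff of_nat_mult)
  then have "2 \<le> K" by (simp add: K)
  then have P: "1 \<le> P" by (simp add: P_def one_le_power)
  have count': "real d + 1 \<le> K * P + S * P" using count by (simp add: K_pow P_def)
  have rhs: "(\<rho> + real m + 2) * K ^ m = \<rho> * K * P + real m * K * P + 2 * (K * P)"
    by (simp add: K_pow algebra_simps)
  have "S * P \<le> (2 * \<rho> + real m ^ 2 * real N) * P" using S(1) P by (intro mult_right_mono) auto
  then have "S * P \<le> 2 * \<rho> * P + real m ^ 2 * real N * P" by (simp add: distrib_right)
  moreover have "2 * \<rho> * P \<le> \<rho> * K * P"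
    using mult_right_mono[OF mult_left_mono[OF \<open>2 \<le> K\<close> \<rho>], of P] P by (simp add: ac_simps)
  moreover have "real m * K * P = 2 * (real m ^ 2 * real N * P) + real m * P"
    by (simp add: K algebra_simps power2_eq_square)
  moreover have "real m \<le> real m * P" using P mult_left_mono[OF P, of "real m"] by simp
  moreover have "0 \<le> real m ^ 2 * real N * P" "0 \<le> K * P" using P \<open>2 \<le> K\<close> by simp_all
  ultimately show ?thesis using count' unfolding rhs by linarith
qed

lemma binary_minus_unit_box_split:
  fixes A :: "real^'n^'m" and x z :: "real^'n" and w :: real
  defines "D \<equiv> {j. (x$j = 0 \<or> x$j = 1) \<and> z$j \<noteq> x$j}" and "F \<equiv> fractional_entries x"
  assumes x: "x \<in> unit_box" and z: "z \<in> binary_points" and entries: "\<And>i j. \<bar>A $ i $ j\<bar> \<le> w"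
  shows "norm1 (x - z) \<le> real (card D) + real (card F)"
    and "norm1 (A *v z - A *v x - (\<Sum>j\<in>D. (z$j - x$j) *\<^sub>R column j A)) \<le> real (card F) * (CARD('m) * w)"
proof -
  have w: "0 \<le> w" using entries abs_ge_zero order_trans by blast
  have z01: "z$j = 0 \<or> z$j = 1" for j using z by (simp add: binary_points_def)
  have D_abs: "\<bar>(z - x)$j\<bar> = 1" if "j \<in> D" for j
    using that z01[of j] by (auto simp: D_def)
  have "\<bar>(z - x)$j\<bar> \<le> 1" for j
    using x z01[of j] by (auto simp: unit_box_def)
  then have F_le: "(\<Sum>j\<in>F. \<bar>(z - x)$j\<bar>) \<le> card F"
    using sum_bounded_above[of F "\<lambda>j. \<bar>(z - x)$j\<bar>" 1] by simp
  have split: "z - x = (\<chi> j. if j \<in> D then (z - x)$j else 0) + (\<chi> j. if j \<in> F then (z - x)$j else 0)"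
    by (auto simp: vec_eq_iff D_def F_def fractional_entries_def)
  have "norm1 (z - x) \<le> (\<Sum>j\<in>D. \<bar>(z - x)$j\<bar>) + (\<Sum>j\<in>F. \<bar>(z - x)$j\<bar>)"
    by (subst split, rule order_trans[OF norm1_triangle]) (simp only: norm1_restrict order_refl)
  also have "(\<Sum>j\<in>D. \<bar>(z - x)$j\<bar>) = (\<Sum>j\<in>D. 1)"
    using D_abs by (intro sum.cong) auto
  finally show "norm1 (x - z) \<le> real (card D) + real (card F)"
    using F_le norm1_minus_commute[of x z] by simp
  have "A *v (z - x) = (\<Sum>j\<in>D. (z$j - x$j) *\<^sub>R column j A) + A *v (\<chi> j. if j \<in> F then (z - x)$j else 0)"
    by (subst split) (simp add: matrix_vector_right_distrib matrix_vector_mult_restrict)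
  then have "A *v z - A *v x - (\<Sum>j\<in>D. (z$j - x$j) *\<^sub>R column j A) = A *v (\<chi> j. if j \<in> F then (z - x)$j else 0)"
    by (simp add: matrix_vector_mult_diff_distrib)
  also have "norm1 \<dots> \<le> CARD('m) * w * (\<Sum>j\<in>F. \<bar>(z - x)$j\<bar>)"
    using norm1_matrix_vector_le[OF entries, of "\<chi> j. if j \<in> F then (z - x)$j else 0"]
    by (simp only: norm1_restrict)
  also have "\<dots> \<le> real (card F) * (CARD('m) * w)"
    using mult_right_mono[OF F_le, of "CARD('m) * w"] w by (simp add: mult.commute)
  finally show "norm1 (A *v z - A *v x - (\<Sum>j\<in>D. (z$j - x$j) *\<^sub>R column j A)) \<le> real (card F) * (CARD('m) * w)" .
qed

lemma closest_binary_card_bound: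
  fixes W :: "int^'n^'m" and x z :: "real^'n"
  defines "D \<equiv> {j. (x$j = 0 \<or> x$j = 1) \<and> z$j \<noteq> x$j}"
  assumes z: "z \<in> binary_points"
    and closest: "\<forall>z'\<in>binary_points. realmat W *v z' = realmat W *v z \<longrightarrow> norm1 (z - x) \<le> norm1 (z' - x)"
    and N: "matinf W = real N"
  shows "real (card D) + 1 \<le> (2 * real (CARD('m) * N) + 1) ^ CARD('m)
      + norm1 (\<Sum>j\<in>D. (z$j - x$j) *\<^sub>R column j (realmat W)) * (2 * real (CARD('m) * N) + 1) ^ (CARD('m) - 1)"
proof (rule card_zero_sum_free_le)
  have "(z$j - x$j) *\<^sub>R column j (realmat W) $ k \<in> \<int> \<and> \<bar>(z$j - x$j) *\<^sub>R column j (realmat W) $ k\<bar> \<le> real N"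
    if "j \<in> D" for j k
  proof -
    have "z$j - x$j = 1 \<or> z$j - x$j = -1" using that z by (auto simp: D_def binary_points_def)
    then show ?thesis using abs_le_matinf[of W k j] N by (auto simp: column_def)
  qed
  then show "\<forall>j\<in>D. \<forall>k. ((z$j - x$j) *\<^sub>R column j (realmat W)) $ k \<in> \<int>"
    "\<forall>j\<in>D. \<forall>k. \<bar>((z$j - x$j) *\<^sub>R column j (realmat W)) $ k\<bar> \<le> real N"
    by auto
  show "(\<Sum>j\<in>B. (z$j - x$j) *\<^sub>R column j (realmat W)) \<noteq> 0" if "B \<subseteq> D" "B \<noteq> {}" for B
    using closest_binary_zero_sum_free[OF z closest] that by (simp add: D_def)
qed simp

lemma binary_proximity:
  fixes W :: "int^'n^'m" and x z :: "real^'n" and \<rho> :: real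
  assumes x: "x \<in> unit_box" and few: "card (fractional_entries x) \<le> CARD('m)"
    and z: "z \<in> binary_points"
    and closest: "\<forall>z'\<in>binary_points. realmat W *v z' = realmat W *v z \<longrightarrow> norm1 (z - x) \<le> norm1 (z' - x)"
    and near: "norm1 (realmat W *v z - realmat W *v x) \<le> 2 * \<rho>"
  shows "norm1 (x - z) \<le> (\<rho> + real CARD('m) + 2) * (2 * real CARD('m) * matinf W + 1) ^ CARD('m)"
proof -
  obtain N where N: "matinf W = real N" using matinf_in_Nats[of W] by (auto elim: Nats_cases)
  define D where "D = {j. (x$j = 0 \<or> x$j = 1) \<and> z$j \<noteq> x$j}"
  define S where "S = (\<Sum>j\<in>D. (z$j - x$j) *\<^sub>R column j (realmat W))"
  note split = binary_minus_unit_box_split[OF x z abs_le_matinf[of W], folded D_def S_def]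
  have "norm1 S \<le> norm1 (realmat W *v z - realmat W *v x) + norm1 (realmat W *v z - realmat W *v x - S)"
    using norm1_triangle[of "realmat W *v z - realmat W *v x" "S - (realmat W *v z - realmat W *v x)"]
    by (simp add: norm1_minus_commute)
  also have "\<dots> \<le> 2 * \<rho> + real CARD('m) ^ 2 * real N"
  proof -
    have "real (card (fractional_entries x)) * (real CARD('m) * real N)
        \<le> real CARD('m) * (real CARD('m) * real N)"
      by (rule mult_right_mono) (use few in simp_all)
    then have "real (card (fractional_entries x)) * (real CARD('m) * matinf W) \<le> real CARD('m) ^ 2 * real N"
      unfolding N power2_eq_square mult.assoc .
    then show ?thesis using near split(2) by linarith
  qed
  finally have "norm1 S \<le> 2 * \<rho> + real CARD('m) ^ 2 * real N" .
  moreover have "S = 0" if "N = 0"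
    using that N by (simp add: S_def column_def matinf_eq_0_iff flip: zero_vec_def)
  ultimately have "real (card D) + real CARD('m) \<le> (\<rho> + CARD('m) + 2) * (2 * real CARD('m) * real N + 1) ^ CARD('m)"
    using closest_binary_card_bound[OF z closest N, folded D_def S_def] near
      norm1_nonneg[of "realmat W *v z - realmat W *v x"]
    by (intro proximity_arithmetic[where N = N and S = "norm1 S"]) (auto simp: mult.assoc norm1_eq_0_iff)
  moreover have "real (card (fractional_entries x)) \<le> real CARD('m)" using few by simp
  ultimately show ?thesis using split(1) N by simp
qed

theorem mainTheorem8:
  fixes W :: "int ^ 'n ^ 'm"
    and g :: "real ^ 'm \<Rightarrow> real"
    and g' :: "real ^ 'm \<Rightarrow> real ^ 'm"
    and L \<mu> \<theta> :: real
  defines "P \<equiv> {realmat W *v x | x. x \<in> unit_box}"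
  assumes convex: "convex_on P g"
    and grad: "\<And>u. u \<in> P \<Longrightarrow> (g has_derivative (\<lambda>h. g' u \<bullet> h)) (at u within P)"
    and grad_cont: "continuous_on P g'"
    and lipschitz: "\<And>u v. u \<in> P \<Longrightarrow> v \<in> P \<Longrightarrow> norminf (g' u - g' v) \<le> L * norm1 (u - v)"
    and sharpness: "sharp P g \<mu> \<theta>"
  shows "\<forall>xs. (xs \<in> unit_box \<and> (\<forall>y\<in>unit_box. g (realmat W *v xs) \<le> g (realmat W *v y))
               \<and> card (fractional_entries xs) \<le> CARD('m)) \<longrightarrow>
          (\<exists>zs. zs \<in> binary_points \<and> (\<forall>y\<in>binary_points. g (realmat W *v zs) \<le> g (realmat W *v y))
               \<and> norm1 (xs - zs) \<le>
                 (\<mu> * rpow (real (CARD('m)) ^ 4 * (L / 4) * matinf W ^ 2) \<theta> + real (CARD('m)) + 2)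
                 * (2 * real (CARD('m)) * matinf W + 1) ^ CARD('m))"
proof (intro allI impI, elim conjE)
  fix x :: "real^'n"
  assume x: "x \<in> unit_box" and min: "\<forall>y\<in>unit_box. g (realmat W *v x) \<le> g (realmat W *v y)"
    and few: "card (fractional_entries x) \<le> CARD('m)"
  have P_eq: "P = (*v) (realmat W) ` unit_box" by (auto simp: P_def)
  define X where "X = real CARD('m) ^ 4 * (L / 4) * matinf W ^ 2"
  obtain z where z: "z \<in> binary_points" "\<forall>y\<in>binary_points. g (realmat W *v z) \<le> g (realmat W *v y)"
    and closest: "\<forall>z'\<in>binary_points. realmat W *v z' = realmat W *v z \<longrightarrow> norm1 (z - x) \<le> norm1 (z' - x)"
    by (rule exists_closest_binary_minimizer)
  have "g (realmat W *v round_binary x) \<le> g (realmat W *v x) + X"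
    unfolding X_def using grad lipschitz x min few by (intro binary_rounding_gap) (simp_all add: P_eq)
  moreover have "g (realmat W *v z) \<le> g (realmat W *v round_binary x)"
    using z(2) round_binary_in_binary_points by blast
  ultimately have gap: "g (realmat W *v z) \<le> g (realmat W *v x) + X" by linarith
  have "norm1 (realmat W *v z - realmat W *v x) \<le> 2 * (\<mu> * rpow X \<theta>)"
    using sharp_norm1_le[OF sharpness _ _ _ gap] binary_points_subset_unit_box z(1) x min
    by (fastforce simp: P_eq)
  then have "norm1 (x - z) \<le> (\<mu> * rpow X \<theta> + real CARD('m) + 2) * (2 * real CARD('m) * matinf W + 1) ^ CARD('m)"
    by (rule binary_proximity[OF x few z(1) closest])
  with z show "\<exists>zs. zs \<in> binary_points \<and> (\<forall>y\<in>binary_points. g (realmat W *v zs) \<le> g (realmat W *v y))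
      \<and> norm1 (x - zs) \<le> (\<mu> * rpow (real CARD('m) ^ 4 * (L / 4) * matinf W ^ 2) \<theta> + real CARD('m) + 2)
        * (2 * real CARD('m) * matinf W + 1) ^ CARD('m)"
    unfolding X_def by blast
qed

end
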